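(* For every $W\in\mathrm{Gr}^{ad}$, $L_W=(R_W)'$, i.e. $L_W=\{q\in Q: qR_W\subset A_1\}$.
   Context: $A_1=\mathbb C[z,\partial]$, $\partial=d/dz$, with quotient skew field $Q\supset\mathbb C(z)[\partial]$. $\mathrm{Gr}^{ad}$: subspaces $W=m_V^{-1}V\subset\mathbb C(z)$ where $V\subset\mathbb C[z]$ is a finite intersection of subspaces $V_\lambda\supset(z-\lambda)^{r}\mathbb C[z]$ (distinct $\lambda$) and $m_V=\prod(z-\lambda)^{\dim\mathbb C[z]/V_\lambda}$. $R_W=\{D\in\mathbb C(z)[\partial]: D.\mathbb C[z]\subset W\}$, $L_W=\{D\in\mathbb C(z)[\partial]: D.W\subset\mathbb C[z]\}$. It is known (Cannings–Holland) that $W=\{D.1: D\in R_W\}$. *)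

theory Defs
  imports "HOL-Computational_Algebra.Computational_Algebra"
begin

type_synonym rfun = "complex poly fract"

definition polyR :: "complex poly \<Rightarrow> rfun" where
  "polyR p = Fract p 1"

text \<open>Derivative d/dz on C(z), given by the quotient rule (independent of the representative).\<close>
definition rderiv :: "rfun \<Rightarrow> rfun" where
  "rderiv x = (THE y. \<forall>p q. q \<noteq> 0 \<and> x = Fract p q \<longrightarrow>
      y = Fract (pderiv p * q - p * pderiv q) (q * q))"

text \<open>An operator is a coefficient function n \<mapsto> a_n (coefficient of d^n), n :: int,
  with support bounded above.\<close>
type_synonym op = "int \<Rightarrow> rfun"

definition is_psido :: "op \<Rightarrow> bool" where
  "is_psido f \<longleftrightarrow> (\<exists>N. \<forall>n>N. f n = 0)"

definition ubnd :: "op \<Rightarrow> int" where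
  "ubnd f = (SOME N. \<forall>n>N. f n = 0)"

text \<open>Generalised binomial coefficient (m choose k) for an integer m:
  m(m-1)...(m-k+1)/k!, which for m < 0 equals (-1)^k ((-m)+k-1 choose k).\<close>
definition ibinom :: "int \<Rightarrow> nat \<Rightarrow> int" where
  "ibinom m k = (if 0 \<le> m then int (nat m choose k)
                 else (-1) ^ k * int ((nat (-m) + k - 1) choose k))"

text \<open>Product: (a d^m)(b d^n) = \<Sum>_{k\<ge>0} (m choose k) a b^{(k)} d^{m+n-k}.\<close>
definition opmult :: "op \<Rightarrow> op \<Rightarrow> op" where
  "opmult f g = (\<lambda>d::int. \<Sum>m\<in>{d - ubnd g .. ubnd f}. \<Sum>n\<in>{d - m .. ubnd g}.
      of_int (ibinom m (nat (m + n - d))) * f m * (rderiv ^^ nat (m + n - d)) (g n))"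

definition is_diffop :: "op \<Rightarrow> bool" where
  "is_diffop f \<longleftrightarrow> is_psido f \<and> (\<forall>n<0. f n = 0)"

text \<open>The Weyl algebra A_1 = C[z,d]: differential operators with polynomial coefficients.\<close>
definition weyl :: "op set" where
  "weyl = {f. is_diffop f \<and> (\<forall>n. f n \<in> range polyR)}"

text \<open>The quotient skew field Q of A_1, realised inside the pseudo-differential operators
  as {a b^-1 : a, b \<in> A_1, b \<noteq> 0} = {q : \<exists>b\<in>A_1. b \<noteq> 0 \<and> q b \<in> A_1}.\<close>
definition Qfield :: "op set" where
  "Qfield = {q. is_psido q \<and> (\<exists>b\<in>weyl. b \<noteq> (\<lambda>_. 0) \<and> opmult q b \<in> weyl)}"

definition act :: "op \<Rightarrow> rfun \<Rightarrow> rfun" where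
  "act D w = (\<Sum>n\<in>{0..ubnd D}. D n * (rderiv ^^ nat n) w)"

definition csubspace :: "complex poly set \<Rightarrow> bool" where
  "csubspace V \<longleftrightarrow> 0 \<in> V \<and> (\<forall>p\<in>V. \<forall>q\<in>V. p + q \<in> V) \<and> (\<forall>c. \<forall>p\<in>V. smult c p \<in> V)"

text \<open>dim C[z]/V: the least number of polynomials spanning C[z] modulo V.\<close>
definition codim :: "complex poly set \<Rightarrow> nat" where
  "codim V = (LEAST k. \<exists>ps :: complex poly list. length ps = k \<and>
      (\<forall>p. \<exists>v\<in>V. \<exists>cs :: complex list. length cs = k \<and>
          p = v + (\<Sum>i<k. smult (cs ! i) (ps ! i))))"

definition Grad :: "rfun set set" where
  "Grad = {W. \<exists>(\<Lambda> :: complex set) (Vs :: complex \<Rightarrow> complex poly set).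
      finite \<Lambda> \<and>
      (\<forall>c\<in>\<Lambda>. csubspace (Vs c) \<and> (\<exists>r::nat. \<forall>p. [:-c, 1:] ^ r dvd p \<longrightarrow> p \<in> Vs c)) \<and>
      W = (\<lambda>p. polyR p / polyR (\<Prod>c\<in>\<Lambda>. [:-c, 1:] ^ codim (Vs c))) ` (\<Inter>c\<in>\<Lambda>. Vs c)}"

definition RW :: "rfun set \<Rightarrow> op set" where
  "RW W = {D. is_diffop D \<and> (\<forall>p. act D (polyR p) \<in> W)}"

definition LW :: "rfun set \<Rightarrow> op set" where
  "LW W = {D. is_diffop D \<and> (\<forall>w\<in>W. act D w \<in> range polyR)}"

definition dual_right :: "op set \<Rightarrow> op set" where
  "dual_right R = {q \<in> Qfield. \<forall>D\<in>R. opmult q D \<in> weyl}"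

end

(*
  Let r be so large that every local condition V\<^sub>\<lambda> contains (z - \<lambda>)^r C[z], and put
  f = \<Prod>(z - \<lambda>)^r. Multiplication by f maps C[z] into W, so f \<in> R_W \<inter> A_1.

  An operator in C(z)[\<partial>] has polynomial coefficients as soon as it maps C[z] into C[z]
  (test it on 1, z, z^2, ...). Hence D R_W \<subseteq> A_1 for D \<in> L_W, and D f \<in> A_1 puts D in Q.

  Conversely let q R_W \<subseteq> A_1. If M < 0 were the largest index with q_M \<noteq> 0, the
  \<partial>^M coefficient of q f would be q_M f \<noteq> 0; so q \<in> C(z)[\<partial>]. Every w \<in> W is D.1 for some
  D \<in> R_W: choose \<sigma> \<equiv> \<lambda> mod (z - \<lambda>)^(r+1) for all \<lambda> (Chinese remainder theorem) and let
  D.h = w \<Sum>_{n \<le> r} (\<sigma> - z)^n h^(n) / n!. The sum, a truncated Taylor expansion of h(\<sigma>),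
  is congruent to h(\<lambda>) modulo (z - \<lambda>)^(r+1), so D.h satisfies every local condition.
  Then q.w = (q D).1 \<in> C[z].
*)
theory Submission
  imports Defs "HOL-Computational_Algebra.Field_as_Ring"
begin

section \<open>Polynomials inside C(z) and the derivation\<close>

lemma polyR_add: "polyR (p + q) = polyR p + polyR q"
  by (simp add: polyR_def)

lemma polyR_diff: "polyR (p - q) = polyR p - polyR q"
  by (simp add: polyR_def)

lemma polyR_mult: "polyR (p * q) = polyR p * polyR q"
  by (simp add: polyR_def)

lemma polyR_0 [simp]: "polyR 0 = 0"
  by (simp add: polyR_def Zero_fract_def)

lemma polyR_1 [simp]: "polyR 1 = 1"
  by (simp add: polyR_def One_fract_def)

lemma polyR_of_nat: "polyR (of_nat k) = of_nat k"
  by (simp add: polyR_def Fract_of_nat_eq)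

lemma polyR_sum: "polyR (\<Sum>i\<in>A. f i) = (\<Sum>i\<in>A. polyR (f i))"
  by (induct A rule: infinite_finite_induct) (simp_all add: polyR_add)

lemma polyR_eq_0_iff [simp]: "polyR p = 0 \<longleftrightarrow> p = 0"
  by (simp add: polyR_def Zero_fract_def eq_fract)

lemma range_polyR_add: "x \<in> range polyR \<Longrightarrow> y \<in> range polyR \<Longrightarrow> x + y \<in> range polyR"
  by (auto simp flip: polyR_add)

lemma range_polyR_diff: "x \<in> range polyR \<Longrightarrow> y \<in> range polyR \<Longrightarrow> x - y \<in> range polyR"
  by (auto simp flip: polyR_diff)

lemma range_polyR_mult: "x \<in> range polyR \<Longrightarrow> y \<in> range polyR \<Longrightarrow> x * y \<in> range polyR"
  by (auto simp flip: polyR_mult)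

lemma range_polyR_sum: "(\<And>i. i \<in> A \<Longrightarrow> f i \<in> range polyR) \<Longrightarrow> (\<Sum>i\<in>A. f i) \<in> range polyR"
  by (induct A rule: infinite_finite_induct) (auto simp flip: polyR_0 intro: range_polyR_add)

lemma range_polyR_cancel_const:
  assumes "c \<noteq> 0" and "polyR [:c:] * x \<in> range polyR"
  shows "x \<in> range polyR"
proof -
  obtain q where q: "polyR [:c:] * x = polyR q" using assms(2) by blast
  have "x = polyR (smult (inverse c) q)"
  proof (rule mult_left_cancel[THEN iffD1])
    show "polyR [:c:] \<noteq> 0" using assms(1) by simp
    show "polyR [:c:] * x = polyR [:c:] * polyR (smult (inverse c) q)"
      using assms(1) by (simp add: q flip: polyR_mult)
  qed
  then show ?thesis by blast
qed

lemma rderiv_Fract: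
  assumes "q \<noteq> 0"
  shows "rderiv (Fract p q) = Fract (pderiv p * q - p * pderiv q) (q * q)"
  unfolding rderiv_def
proof (rule the_equality)
  show "\<forall>p' q'. q' \<noteq> 0 \<and> Fract p q = Fract p' q' \<longrightarrow>
      Fract (pderiv p * q - p * pderiv q) (q * q) = Fract (pderiv p' * q' - p' * pderiv q') (q' * q')"
  proof (intro allI impI, elim conjE)
    fix p' q' :: "complex poly"
    assume q': "q' \<noteq> 0" and e: "Fract p q = Fract p' q'"
    have cross: "p * q' = p' * q" using e assms q' by (simp add: eq_fract)
    have "pderiv p * q' + p * pderiv q' = pderiv p' * q + p' * pderiv q"
      using arg_cong[OF cross, of pderiv] by (simp add: pderiv_mult algebra_simps)
    with cross have "(pderiv p * q - p * pderiv q) * (q' * q') = (pderiv p' * q' - p' * pderiv q') * (q * q)"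
      by algebra
    then show "Fract (pderiv p * q - p * pderiv q) (q * q) = Fract (pderiv p' * q' - p' * pderiv q') (q' * q')"
      using assms q' by (simp add: eq_fract)
  qed
qed (use assms in blast)

lemma rderiv_add: "rderiv (x + y) = rderiv x + rderiv y"
  by (cases x, cases y) (simp add: rderiv_Fract eq_fract pderiv_mult pderiv_add algebra_simps)

lemma rderiv_mult: "rderiv (x * y) = rderiv x * y + x * rderiv y"
  by (cases x, cases y) (simp add: rderiv_Fract eq_fract pderiv_mult pderiv_add algebra_simps)

lemma rderiv_polyR: "rderiv (polyR p) = polyR (pderiv p)"
  by (simp add: polyR_def rderiv_Fract)

lemma rderiv_0 [simp]: "rderiv 0 = 0"
  using rderiv_polyR[of 0] by simp

lemma rderiv_of_nat [simp]: "rderiv (of_nat k) = 0"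
  using rderiv_polyR[of "of_nat k"] by (simp add: polyR_of_nat)

lemma rderiv_sum: "rderiv (\<Sum>i\<in>A. f i) = (\<Sum>i\<in>A. rderiv (f i))"
  by (induct A rule: infinite_finite_induct) (simp_all add: rderiv_add)

lemma funpow_rderiv_0 [simp]: "(rderiv ^^ n) 0 = 0"
  by (induct n) simp_all

lemma funpow_rderiv_add: "(rderiv ^^ n) (x + y) = (rderiv ^^ n) x + (rderiv ^^ n) y"
  by (induct n) (simp_all add: rderiv_add)

lemma funpow_rderiv_sum: "(rderiv ^^ n) (\<Sum>i\<in>A. f i) = (\<Sum>i\<in>A. (rderiv ^^ n) (f i))"
  by (induct A rule: infinite_finite_induct) (simp_all add: funpow_rderiv_add)

lemma funpow_rderiv_polyR: "(rderiv ^^ n) (polyR p) = polyR ((pderiv ^^ n) p)"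
  by (induct n) (simp_all add: rderiv_polyR)

lemma range_polyR_funpow_rderiv: "x \<in> range polyR \<Longrightarrow> (rderiv ^^ n) x \<in> range polyR"
  by (auto simp: funpow_rderiv_polyR)

lemma sum_choose_Suc_split:
  fixes a b :: "nat \<Rightarrow> 'a::comm_ring_1"
  shows "(\<Sum>i\<le>Suc n. of_nat (Suc n choose i) * a i * b (Suc n - i))
       = (\<Sum>i\<le>n. of_nat (n choose i) * a (Suc i) * b (n - i))
         + (\<Sum>i\<le>n. of_nat (n choose i) * a i * b (Suc (n - i)))"
proof -
  have pascal: "Suc n choose i = (if i = 0 then 0 else n choose (i - 1)) + (n choose i)" for i
    by (cases i) simp_all
  have "(\<Sum>i\<le>Suc n. of_nat (Suc n choose i) * a i * b (Suc n - i))
     = (\<Sum>i\<le>Suc n. of_nat (if i = 0 then 0 else n choose (i - 1)) * a i * b (Suc n - i))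
       + (\<Sum>i\<le>Suc n. of_nat (n choose i) * a i * b (Suc n - i))"
    unfolding pascal by (simp add: sum.distrib[symmetric] algebra_simps)
  also have "(\<Sum>i\<le>Suc n. of_nat (if i = 0 then 0 else n choose (i - 1)) * a i * b (Suc n - i))
     = (\<Sum>i\<le>n. of_nat (n choose i) * a (Suc i) * b (n - i))"
    by (subst sum.atMost_Suc_shift) simp
  also have "(\<Sum>i\<le>Suc n. of_nat (n choose i) * a i * b (Suc n - i))
     = (\<Sum>i\<le>n. of_nat (n choose i) * a i * b (Suc (n - i)))"
    by (simp add: Suc_diff_le binomial_eq_0)
  finally show ?thesis .
qed

lemma funpow_rderiv_mult:
  "(rderiv ^^ n) (x * y) = (\<Sum>i\<le>n. of_nat (n choose i) * (rderiv ^^ i) x * (rderiv ^^ (n - i)) y)"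
proof (induction n)
  case (Suc n)
  have "(rderiv ^^ Suc n) (x * y) = rderiv (\<Sum>i\<le>n. of_nat (n choose i) * (rderiv ^^ i) x * (rderiv ^^ (n - i)) y)"
    using Suc.IH by simp
  also have "\<dots> = (\<Sum>i\<le>n. of_nat (n choose i) * (rderiv ^^ Suc i) x * (rderiv ^^ (n - i)) y)
     + (\<Sum>i\<le>n. of_nat (n choose i) * (rderiv ^^ i) x * (rderiv ^^ Suc (n - i)) y)"
    by (simp add: rderiv_sum rderiv_mult algebra_simps sum.distrib)
  also have "\<dots> = (\<Sum>i\<le>Suc n. of_nat (Suc n choose i) * (rderiv ^^ i) x * (rderiv ^^ (Suc n - i)) y)"
    by (rule sum_choose_Suc_split[symmetric])
  finally show ?case .
qed simp

section \<open>Differential operators\<close>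

lemma psido_vanishes_above_ubnd:
  assumes "is_psido f" and "ubnd f < n"
  shows "f n = 0"
proof -
  from assms(1) have "\<forall>n>ubnd f. f n = 0" unfolding is_psido_def ubnd_def by (rule someI_ex)
  with assms(2) show ?thesis by blast
qed

lemma diffop_bounded:
  assumes "is_diffop D"
  obtains a :: nat where "\<forall>n>int a. D n = 0"
proof -
  obtain N where "\<forall>n>N. D n = 0" using assms by (auto simp: is_diffop_def is_psido_def)
  then have "\<forall>n>int (nat N). D n = 0" by auto
  then show ?thesis by (rule that)
qed

lemma sum_atLeastAtMost_int_nat: "(\<Sum>n\<in>{0..int a}. g n) = (\<Sum>i\<le>a. g (int i))"
proof -
  have "{0..int a} = int ` {..a}"
    by (simp add: image_int_atLeastAtMost flip: atLeast0AtMost)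
  then show ?thesis by (simp add: sum.reindex)
qed

lemma act_eq_sum:
  assumes "is_diffop D" and "\<forall>n>int a. D n = 0"
  shows "act D w = (\<Sum>i\<le>a. D (int i) * (rderiv ^^ i) w)"
proof -
  have "act D w = (\<Sum>n\<in>{0..int a}. D n * (rderiv ^^ nat n) w)"
    unfolding act_def using assms psido_vanishes_above_ubnd[of D]
    by (intro sum.mono_neutral_cong) (auto simp: is_diffop_def)
  then show ?thesis by (simp add: sum_atLeastAtMost_int_nat)
qed

lemma act_weyl_polyR: "E \<in> weyl \<Longrightarrow> act E (polyR h) \<in> range polyR"
  unfolding act_def weyl_def
  by (auto intro!: range_polyR_sum range_polyR_mult range_polyR_funpow_rderiv)

lemma ibinom_of_nat: "ibinom (int i) k = int (i choose k)"
  by (simp add: ibinom_def)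

lemma opmult_diffop_eq_box:
  assumes D: "is_diffop D" "\<forall>n>int a. D n = 0" and E: "is_diffop E" "\<forall>n>int b. E n = 0"
  shows "opmult D E d = (\<Sum>i\<le>a. \<Sum>j\<le>b. if d \<le> int i + int j then
     of_nat (i choose nat (int i + int j - d)) * D (int i) * (rderiv ^^ nat (int i + int j - d)) (E (int j))
     else 0)"
proof -
  define F where "F m n = of_int (ibinom m (nat (m + n - d))) * D m * (rderiv ^^ nat (m + n - d)) (E n)" for m n
  have D0: "D m = 0" if "m \<notin> {0..int a}" for m
    using D that by (auto simp: is_diffop_def)
  have D0': "D m = 0" if "m > ubnd D" for m
    using D that psido_vanishes_above_ubnd[of D] by (auto simp: is_diffop_def)
  have E0: "E n = 0" if "n \<notin> {0..int b}" for n
    using E that by (auto simp: is_diffop_def)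
  have E0': "E n = 0" if "n > ubnd E" for n
    using E that psido_vanishes_above_ubnd[of E] by (auto simp: is_diffop_def)
  have inner: "(\<Sum>n\<in>{d - m..ubnd E}. F m n) = (\<Sum>n\<in>{0..int b}. if d \<le> m + n then F m n else 0)" for m
  proof (intro sum.mono_neutral_cong)
    fix n assume "n \<in> {d - m..ubnd E} - {0..int b}"
    then show "F m n = 0" by (simp add: F_def E0)
  next
    fix n assume "n \<in> {0..int b} - {d - m..ubnd E}"
    then show "(if d \<le> m + n then F m n else 0) = 0" by (auto simp: F_def E0')
  qed auto
  have "opmult D E d = (\<Sum>m\<in>{d - ubnd E..ubnd D}. \<Sum>n\<in>{0..int b}. if d \<le> m + n then F m n else 0)"
    unfolding opmult_def F_def[symmetric] inner ..
  also have "\<dots> = (\<Sum>m\<in>{0..int a}. \<Sum>n\<in>{0..int b}. if d \<le> m + n then F m n else 0)"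
  proof (intro sum.mono_neutral_cong)
    fix m assume "m \<in> {d - ubnd E..ubnd D} - {0..int a}"
    then show "(\<Sum>n\<in>{0..int b}. if d \<le> m + n then F m n else 0) = 0"
      by (intro sum.neutral) (simp add: F_def D0)
  next
    fix m assume m: "m \<in> {0..int a} - {d - ubnd E..ubnd D}"
    show "(\<Sum>n\<in>{0..int b}. if d \<le> m + n then F m n else 0) = 0"
    proof (cases "m > ubnd D")
      case True
      then show ?thesis by (intro sum.neutral) (simp add: F_def D0')
    next
      case False
      then show ?thesis using m by (intro sum.neutral) (auto simp: F_def E0')
    qed
  qed auto
  also have "\<dots> = (\<Sum>i\<le>a. \<Sum>j\<le>b. if d \<le> int i + int j then
     of_nat (i choose nat (int i + int j - d)) * D (int i) * (rderiv ^^ nat (int i + int j - d)) (E (int j))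
     else 0)"
    unfolding F_def sum_atLeastAtMost_int_nat ibinom_of_nat of_int_of_nat_eq ..
  finally show ?thesis .
qed

lemma opmult_diffop_eq:
  assumes D: "is_diffop D" "\<forall>n>int a. D n = 0" and E: "is_diffop E" "\<forall>n>int b. E n = 0"
  shows "opmult D E d = (\<Sum>i\<le>a. \<Sum>j\<le>b. \<Sum>k\<le>i. if int (i + j) = d + int k then
     of_nat (i choose k) * D (int i) * (rderiv ^^ k) (E (int j)) else 0)"
proof -
  define X where "X i j k = of_nat (i choose k) * D (int i) * (rderiv ^^ k) (E (int j))" for i j k
  have pair: "(if d \<le> int i + int j then X i j (nat (int i + int j - d)) else 0)
      = (\<Sum>k\<le>i. if int (i + j) = d + int k then X i j k else 0)" for i j
  proof (cases "d \<le> int i + int j")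
    case True
    define k0 where "k0 = nat (int i + int j - d)"
    have "(\<Sum>k\<le>i. if int (i + j) = d + int k then X i j k else 0) = (\<Sum>k\<le>i. if k = k0 then X i j k else 0)"
      using True by (intro sum.cong) (auto simp: k0_def)
    also have "\<dots> = X i j k0"
      by (simp add: X_def binomial_eq_0)
    finally show ?thesis using True by (simp add: k0_def)
  qed (auto intro!: sum.neutral[symmetric])
  have "opmult D E d = (\<Sum>i\<le>a. \<Sum>j\<le>b. if d \<le> int i + int j then X i j (nat (int i + int j - d)) else 0)"
    unfolding X_def by (rule opmult_diffop_eq_box[OF D E])
  also have "\<dots> = (\<Sum>i\<le>a. \<Sum>j\<le>b. \<Sum>k\<le>i. if int (i + j) = d + int k then X i j k else 0)"
    by (simp only: pair)
  finally show ?thesis by (simp only: X_def)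
qed

lemma opmult_diffop_bounded:
  assumes D: "is_diffop D" "\<forall>n>int a. D n = 0" and E: "is_diffop E" "\<forall>n>int b. E n = 0"
  shows "is_diffop (opmult D E)" and "\<forall>d>int (a + b). opmult D E d = 0"
proof -
  show above: "\<forall>d>int (a + b). opmult D E d = 0"
    by (auto simp: opmult_diffop_eq[OF D E] intro!: sum.neutral)
  have "\<forall>d<0. opmult D E d = 0"
    by (auto simp: opmult_diffop_eq[OF D E] intro!: sum.neutral)
  with above show "is_diffop (opmult D E)"
    unfolding is_diffop_def is_psido_def by blast
qed

lemma diffop_opmult: "is_diffop D \<Longrightarrow> is_diffop E \<Longrightarrow> is_diffop (opmult D E)"
  by (metis diffop_bounded opmult_diffop_bounded(1))

lemma act_opmult:
  assumes "is_diffop D" and "is_diffop E"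
  shows "act (opmult D E) w = act D (act E w)"
proof -
  obtain a b where D: "\<forall>n>int a. D n = 0" and E: "\<forall>n>int b. E n = 0"
    using assms by (metis diffop_bounded)
  note DE = assms(1) D assms(2) E
  define X where "X i j k = of_nat (i choose k) * D (int i) * (rderiv ^^ k) (E (int j))" for i j k
  have "act (opmult D E) w = (\<Sum>d\<le>a + b. opmult D E (int d) * (rderiv ^^ d) w)"
    using opmult_diffop_bounded[OF DE] by (rule act_eq_sum)
  also have "\<dots> = (\<Sum>d\<le>a + b. \<Sum>i\<le>a. \<Sum>j\<le>b. \<Sum>k\<le>i.
      if d = i + j - k then X i j k * (rderiv ^^ d) w else 0)"
    by (auto simp: opmult_diffop_eq[OF DE] X_def sum_distrib_right intro!: sum.cong)
  also have "\<dots> = (\<Sum>i\<le>a. \<Sum>j\<le>b. \<Sum>k\<le>i. \<Sum>d\<le>a + b.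
      if d = i + j - k then X i j k * (rderiv ^^ d) w else 0)"
    by (simp only: sum.swap[of _ "{..a + b}"])
  also have "\<dots> = (\<Sum>i\<le>a. \<Sum>j\<le>b. \<Sum>k\<le>i. X i j k * (rderiv ^^ (i + j - k)) w)"
    by (auto intro!: sum.cong)
  also have "\<dots> = (\<Sum>i\<le>a. D (int i) * (rderiv ^^ i) (\<Sum>j\<le>b. E (int j) * (rderiv ^^ j) w))"
  proof -
    have "(rderiv ^^ (i + j - k)) w = (rderiv ^^ (i - k)) ((rderiv ^^ j) w)" if "k \<le> i" for i j k
      using that funpow_add[of "i - k" j rderiv] by (simp add: Nat.add_diff_assoc2)
    then show ?thesis
      by (simp add: X_def funpow_rderiv_sum funpow_rderiv_mult sum_distrib_left mult_ac)
  qed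
  also have "\<dots> = act D (act E w)"
    by (simp add: act_eq_sum[OF assms(1) D] act_eq_sum[OF assms(2) E])
  finally show ?thesis .
qed

lemma funpow_pderiv_monom:
  "(pderiv ^^ j) (monom (1::complex) n) = monom (of_nat (\<Prod>i<j. n - i)) (n - j)"
  by (induct j) (simp_all add: pderiv_monom mult_ac)

lemma act_polyR_monom:
  assumes E: "is_diffop E" "\<forall>k>int a. E k = 0" and "n \<le> a"
  shows "act E (polyR (monom 1 n)) = (\<Sum>j<n. E (int j) * polyR (monom (of_nat (\<Prod>i<j. n - i)) (n - j)))
           + polyR [:of_nat (\<Prod>i<n. n - i):] * E (int n)"
proof -
  define f where "f j = E (int j) * polyR (monom (of_nat (\<Prod>i<j. n - i)) (n - j))" for j
  have "f j = 0" if "n < j" for j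
  proof -
    have "(\<Prod>i<j. n - i) = 0" using that by (intro prod_zero) auto
    then show ?thesis by (simp add: f_def)
  qed
  have "act E (polyR (monom 1 n)) = (\<Sum>j\<le>a. f j)"
    unfolding f_def by (simp only: act_eq_sum[OF E] funpow_rderiv_polyR funpow_pderiv_monom)
  also have "\<dots> = (\<Sum>j\<le>n. f j)"
    using assms(3) \<open>\<And>j. n < j \<Longrightarrow> f j = 0\<close> by (intro sum.mono_neutral_cong) auto
  also have "\<dots> = (\<Sum>j<n. f j) + f n"
    by (simp flip: lessThan_Suc_atMost)
  finally show ?thesis by (simp add: f_def monom_0 mult.commute)
qed

lemma diffop_in_weyl_iff:
  assumes E: "is_diffop E"
  shows "E \<in> weyl \<longleftrightarrow> (\<forall>h. act E (polyR h) \<in> range polyR)"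
proof
  assume poly: "\<forall>h. act E (polyR h) \<in> range polyR"
  obtain a where a: "\<forall>k>int a. E k = 0" using E by (rule diffop_bounded)
  have "E (int n) \<in> range polyR" for n
  proof (induction n rule: less_induct)
    case (less n)
    show ?case
    proof (cases "n \<le> a")
      case True
      let ?lower = "\<Sum>j<n. E (int j) * polyR (monom (of_nat (\<Prod>i<j. n - i)) (n - j))"
      have "?lower \<in> range polyR"
        using less by (auto intro!: range_polyR_sum range_polyR_mult)
      then have "act E (polyR (monom 1 n)) - ?lower \<in> range polyR"
        using poly by (blast intro: range_polyR_diff)
      then have "polyR [:of_nat (\<Prod>i<n. n - i):] * E (int n) \<in> range polyR"
        by (simp add: act_polyR_monom[OF E a True])
      then show ?thesis by (rule range_polyR_cancel_const[rotated]) simp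
    qed (use a in \<open>auto simp flip: polyR_0\<close>)
  qed
  moreover have "E n \<in> range polyR" if "n < 0" for n
    using E that by (simp add: is_diffop_def flip: polyR_0)
  ultimately have "E n \<in> range polyR" for n
    by (metis nonneg_int_cases not_less)
  then show "E \<in> weyl" using E by (simp add: weyl_def)
qed (blast intro: act_weyl_polyR)

definition mult_op :: "rfun \<Rightarrow> op" where
  "mult_op x = (\<lambda>n. if n = 0 then x else 0)"

lemma diffop_mult_op: "is_diffop (mult_op x)"
  by (auto simp: mult_op_def is_diffop_def is_psido_def)

lemma act_mult_op: "act (mult_op x) w = x * w"
proof -
  have vanish: "\<forall>n>int 0. mult_op x n = 0" by (simp add: mult_op_def)
  show ?thesis unfolding act_eq_sum[OF diffop_mult_op vanish] by (simp add: mult_op_def)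
qed

lemma mult_op_polyR_in_weyl: "mult_op (polyR p) \<in> weyl"
  using diffop_mult_op by (auto simp: weyl_def mult_op_def simp flip: polyR_0)

lemma mult_op_eq_0_iff: "mult_op x = (\<lambda>_. 0) \<longleftrightarrow> x = 0"
  by (metis mult_op_def)

lemma opmult_mult_op:
  assumes q: "is_psido q" and g: "g \<noteq> 0"
  shows "opmult q (mult_op g) d
    = (\<Sum>m\<in>{d..ubnd q}. of_int (ibinom m (nat (m - d))) * q m * (rderiv ^^ nat (m - d)) g)"
proof -
  define G where "G m = of_int (ibinom m (nat (m - d))) * q m * (rderiv ^^ nat (m - d)) g" for m
  have u: "0 \<le> ubnd (mult_op g)"
    using psido_vanishes_above_ubnd[of "mult_op g" 0] diffop_mult_op g
    by (force simp: mult_op_def is_diffop_def)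
  have inner: "(\<Sum>n\<in>{d - m..ubnd (mult_op g)}.
      of_int (ibinom m (nat (m + n - d))) * q m * (rderiv ^^ nat (m + n - d)) (mult_op g n))
    = (if d \<le> m then G m else 0)" for m
  proof -
    have "(\<Sum>n\<in>{d - m..ubnd (mult_op g)}.
        of_int (ibinom m (nat (m + n - d))) * q m * (rderiv ^^ nat (m + n - d)) (mult_op g n))
      = (\<Sum>n\<in>{d - m..ubnd (mult_op g)}. if n = 0 then G m else 0)"
      by (intro sum.cong) (auto simp: mult_op_def G_def)
    then show ?thesis using u by simp
  qed
  have "opmult q (mult_op g) d = (\<Sum>m\<in>{d - ubnd (mult_op g)..ubnd q}. if d \<le> m then G m else 0)"
    unfolding opmult_def inner ..
  also have "\<dots> = (\<Sum>m\<in>{d..ubnd q}. G m)"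
    using u by (intro sum.mono_neutral_cong) auto
  finally show ?thesis by (simp only: G_def)
qed

lemma opmult_mult_op_top_coeff:
  assumes q: "is_psido q" and g: "g \<noteq> 0" and "d < 0"
    and gap: "\<And>m. d < m \<Longrightarrow> m < 0 \<Longrightarrow> q m = 0"
  shows "opmult q (mult_op g) d = q d * g"
proof -
  have "(\<Sum>m\<in>{d..ubnd q}. of_int (ibinom m (nat (m - d))) * q m * (rderiv ^^ nat (m - d)) g)
      = (\<Sum>m\<in>{d}. of_int (ibinom m (nat (m - d))) * q m * (rderiv ^^ nat (m - d)) g)"
  proof (intro sum.mono_neutral_cong)
    fix m assume m: "m \<in> {d..ubnd q} - {d}"
    show "of_int (ibinom m (nat (m - d))) * q m * (rderiv ^^ nat (m - d)) g = 0"
    proof (cases "m < 0")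
      case False
      then have "ibinom m (nat (m - d)) = 0"
        using \<open>d < 0\<close> by (simp add: ibinom_def binomial_eq_0)
      then show ?thesis by simp
    qed (use m gap in auto)
  qed (use psido_vanishes_above_ubnd[OF q] in auto)
  then show ?thesis
    by (simp add: opmult_mult_op[OF q g] ibinom_def)
qed

lemma diffop_if_opmult_mult_op_diffop:
  assumes q: "is_psido q" and g: "g \<noteq> 0" and qg: "is_diffop (opmult q (mult_op g))"
  shows "is_diffop q"
proof -
  have "q (-1 - int k) = 0" for k
  proof (induction k rule: less_induct)
    case (less k)
    have gap: "q m = 0" if "-1 - int k < m" "m < 0" for m
      using less[of "nat (-1 - m)"] that by simp
    have "q (-1 - int k) * g = opmult q (mult_op g) (-1 - int k)"
      by (rule opmult_mult_op_top_coeff[OF q g, symmetric]) (use gap in auto)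
    also have "\<dots> = 0"
      using qg by (simp add: is_diffop_def)
    finally show ?case using g by simp
  qed
  moreover have "n = -1 - int (nat (-1 - n))" if "n < 0" for n
    using that by simp
  ultimately have "q n = 0" if "n < 0" for n
    using that by metis
  with q show ?thesis by (simp add: is_diffop_def)
qed

section \<open>Taylor polynomials and interpolation\<close>

definition taylor_poly :: "'a::field_char_0 poly \<Rightarrow> nat \<Rightarrow> 'a poly \<Rightarrow> 'a poly" where
  "taylor_poly s N h = (\<Sum>j<N. smult (1 / fact j) (s ^ j * (pderiv ^^ j) h))"

lemma taylor_poly_1: "taylor_poly s (Suc N) 1 = 1"
proof -
  have const: "(pderiv ^^ Suc j) 1 = 0" for j
    by (induct j) simp_all
  show ?thesis
    unfolding taylor_poly_def sum.lessThan_Suc_shift by (simp add: const del: funpow.simps)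
qed

lemma taylor_poly_dvd_diff:
  assumes "X dvd t - s"
  shows "X dvd taylor_poly t N h - taylor_poly s N h"
proof -
  have "taylor_poly t N h - taylor_poly s N h = (\<Sum>j<N. smult (1 / fact j) ((t ^ j - s ^ j) * (pderiv ^^ j) h))"
    unfolding taylor_poly_def by (simp add: sum_subtractf[symmetric] smult_diff_right algebra_simps)
  also have "X dvd \<dots>"
    using assms by (intro dvd_sum dvd_smult dvd_mult2) (metis dvd_trans dvd_triv_left power_diff_sumr2)
  finally show ?thesis .
qed

lemma pderiv_taylor_poly:
  fixes c :: "'a::field_char_0"
  shows "pderiv (taylor_poly [:c, -1:] (Suc N) h) = smult (1 / fact N) ([:c, -1:] ^ N * (pderiv ^^ Suc N) h)"
proof (induct N)
  case (Suc N)
  let ?s = "[:c, -1:]" and ?d = "\<lambda>j. (pderiv ^^ j) h"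
  have ps: "pderiv ?s = -1"
    by (simp add: pderiv_pCons) (metis add.inverse_neutral minus_pCons one_pCons)
  have fact: "(1 / fact (Suc N)) * of_nat (Suc N) = (1 / fact N :: 'a)"
    by (simp add: fact_Suc field_simps del: of_nat_Suc)
  have "taylor_poly ?s (Suc (Suc N)) h = taylor_poly ?s (Suc N) h + smult (1 / fact (Suc N)) (?s ^ Suc N * ?d (Suc N))"
    by (simp add: taylor_poly_def)
  then have "pderiv (taylor_poly ?s (Suc (Suc N)) h) = smult (1 / fact N) (?s ^ N * ?d (Suc N))
     + smult (1 / fact (Suc N)) (?s ^ Suc N * ?d (Suc (Suc N)) - smult (of_nat (Suc N)) (?s ^ N * ?d (Suc N)))"
    using Suc by (simp add: pderiv_add pderiv_smult pderiv_mult pderiv_power_Suc ps algebra_simps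
        del: power_Suc funpow.simps of_nat_Suc) (simp add: algebra_simps)
  also have "\<dots> = smult (1 / fact (Suc N)) (?s ^ Suc N * ?d (Suc (Suc N)))"
    by (simp add: smult_diff_right fact del: of_nat_Suc power_Suc funpow.simps)
  finally show ?case .
qed (simp add: taylor_poly_def)

lemma poly_taylor_poly_at:
  fixes c :: "'a::field_char_0"
  shows "poly (taylor_poly [:c, -1:] (Suc N) h) c = poly h c"
proof -
  have "taylor_poly [:c, -1:] (Suc N) h
      = h + (\<Sum>j<N. smult (1 / fact (Suc j)) ([:c, -1:] ^ Suc j * (pderiv ^^ Suc j) h))"
    unfolding taylor_poly_def by (subst sum.lessThan_Suc_shift) simp
  then show ?thesis by (simp add: poly_sum del: funpow.simps power_Suc)
qed

lemma power_Suc_dvd_if_root_pderiv_dvd: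
  fixes q :: "'a::{idom, semiring_char_0} poly"
  assumes "poly q c = 0" and "[:-c, 1:] ^ M dvd pderiv q"
  shows "[:-c, 1:] ^ Suc M dvd q"
proof (cases "pderiv q = 0")
  case True
  then obtain a where "q = [:a:]" by (metis degree_eq_zeroE pderiv_eq_0_iff)
  then show ?thesis using assms(1) by simp
next
  case False
  then have "q \<noteq> 0" by auto
  then have "order c q = Suc (order c (pderiv q))" using assms(1) by (rule order_pderiv)
  moreover have "M \<le> order c (pderiv q)" using assms(2) False by (simp add: order_divides)
  ultimately show ?thesis using \<open>q \<noteq> 0\<close> order_divides[of c "Suc M" q] by simp
qed

lemma taylor_poly_congruent_value:
  fixes c :: "'a::field_char_0"
  assumes "[:-c, 1:] ^ N dvd t - [:c, -1:]"
  shows "[:-c, 1:] ^ N dvd taylor_poly t N h - [:poly h c:]"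
proof -
  have at_c: "[:-c, 1:] ^ N dvd taylor_poly [:c, -1:] N h - [:poly h c:]"
  proof (cases N)
    case (Suc M)
    have "[:-c, 1:] ^ M dvd [:c, -1:] ^ M"
      by (intro dvd_power_same dvdI[of _ _ "-1"]) simp
    then have "[:-c, 1:] ^ M dvd pderiv (taylor_poly [:c, -1:] N h - [:poly h c:])"
      unfolding Suc pderiv_diff pderiv_taylor_poly pderiv_pCons by (simp add: dvd_smult dvd_mult2)
    then show ?thesis
      unfolding Suc by (intro power_Suc_dvd_if_root_pderiv_dvd) (simp_all add: poly_taylor_poly_at)
  qed simp
  have "taylor_poly t N h - [:poly h c:]
      = (taylor_poly t N h - taylor_poly [:c, -1:] N h) + (taylor_poly [:c, -1:] N h - [:poly h c:])"
    by simp
  also have "[:-c, 1:] ^ N dvd \<dots>"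
    using taylor_poly_dvd_diff[OF assms] at_c by (rule dvd_add)
  finally show ?thesis .
qed

lemma coprime_linear_poly:
  fixes c d :: "'a::field"
  assumes "c \<noteq> d"
  shows "coprime [:-c, 1:] [:-d, 1:]"
proof (rule coprimeI)
  fix e assume "e dvd [:-c, 1:]" "e dvd [:-d, 1:]"
  then have "e dvd [:-c, 1:] - [:-d, 1:]" by (rule dvd_diff)
  moreover have "is_unit ([:-c, 1:] - [:-d, 1:])"
    using assms by (simp add: is_unit_const_poly_iff dvd_field_iff)
  ultimately show "is_unit e" by (rule dvd_unit_imp_unit)
qed

lemma poly_chinese_remainder:
  fixes g :: "'a::field_gcd \<Rightarrow> 'a poly"
  assumes "finite \<Lambda>"
  shows "\<exists>\<sigma>. \<forall>c\<in>\<Lambda>. [:-c, 1:] ^ R dvd \<sigma> - g c"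
  using assms
proof (induct \<Lambda> rule: finite_induct)
  case (insert c0 \<Lambda>)
  then obtain \<sigma>0 where \<sigma>0: "\<forall>c\<in>\<Lambda>. [:-c, 1:] ^ R dvd \<sigma>0 - g c" by blast
  define P where "P = (\<Prod>c\<in>\<Lambda>. [:-c, 1:] ^ R)"
  define Q where "Q = [:-c0, 1:] ^ R"
  have "coprime P Q"
    unfolding P_def Q_def
  proof (rule prod_coprime_left)
    fix c assume "c \<in> \<Lambda>"
    then have "coprime [:-c, 1:] [:-c0, 1:]" using insert(2) by (intro coprime_linear_poly) auto
    then show "coprime ([:-c, 1:] ^ R) ([:-c0, 1:] ^ R)" by simp
  qed
  then obtain x y where bezout: "x * P + y * Q = 1"
    by (metis bezout_coefficients_fst_snd coprime_iff_gcd_eq_1)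
  define \<sigma> where "\<sigma> = \<sigma>0 * (y * Q) + g c0 * (x * P)"
  have "[:-c, 1:] ^ R dvd \<sigma> - g c" if c: "c \<in> insert c0 \<Lambda>" for c
  proof (cases "c = c0")
    case True
    have "\<sigma> - g c = (y * Q) * (\<sigma>0 - g c0)" unfolding \<sigma>_def True using bezout by algebra
    then show ?thesis using True by (simp add: Q_def)
  next
    case False
    then have "c \<in> \<Lambda>" using c by simp
    have "\<sigma> - g c = (\<sigma>0 - g c) + (x * P) * (g c0 - \<sigma>0)" unfolding \<sigma>_def using bezout by algebra
    moreover have "[:-c, 1:] ^ R dvd P" unfolding P_def using insert(1) \<open>c \<in> \<Lambda>\<close> by (rule dvd_prodI)
    ultimately show ?thesis using \<sigma>0 \<open>c \<in> \<Lambda>\<close> by (metis dvd_add dvd_mult2 dvd_mult)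
  qed
  then show ?case by blast
qed simp

definition taylor_op :: "rfun \<Rightarrow> complex poly \<Rightarrow> nat \<Rightarrow> op" where
  "taylor_op w t N n = (if 0 \<le> n \<and> n < int N then w * polyR (smult (1 / fact (nat n)) (t ^ nat n)) else 0)"

lemma diffop_taylor_op: "is_diffop (taylor_op w t N)"
  unfolding is_diffop_def is_psido_def taylor_op_def by (auto intro!: exI[of _ "int N"])

lemma act_taylor_op: "act (taylor_op w t N) (polyR h) = w * polyR (taylor_poly t N h)"
proof -
  have vanish: "\<forall>n>int N. taylor_op w t N n = 0" by (simp add: taylor_op_def)
  have "act (taylor_op w t N) (polyR h) = (\<Sum>i\<le>N. taylor_op w t N (int i) * (rderiv ^^ i) (polyR h))"
    by (rule act_eq_sum[OF diffop_taylor_op vanish])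
  also have "\<dots> = (\<Sum>i<N. w * polyR (smult (1 / fact i) (t ^ i)) * polyR ((pderiv ^^ i) h))"
    by (intro sum.mono_neutral_cong) (auto simp: taylor_op_def funpow_rderiv_polyR)
  also have "\<dots> = w * polyR (taylor_poly t N h)"
    by (simp add: taylor_poly_def polyR_sum sum_distrib_left mult.assoc flip: polyR_mult)
  finally show ?thesis .
qed

section \<open>The adelic Grassmannian\<close>

lemma opmult_LW_RW_in_weyl:
  assumes "D \<in> LW W" and "E \<in> RW W"
  shows "opmult D E \<in> weyl"
proof -
  have D: "is_diffop D" and E: "is_diffop E" using assms by (simp_all add: LW_def RW_def)
  have "act (opmult D E) (polyR h) \<in> range polyR" for h
    using assms by (simp add: act_opmult[OF D E] LW_def RW_def)
  then show ?thesis using diffop_in_weyl_iff[OF diffop_opmult[OF D E]] by blast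
qed

lemma LW_subset_dual_right:
  assumes "b \<in> RW W" and "b \<in> weyl" and "b \<noteq> (\<lambda>_. 0)"
  shows "LW W \<subseteq> dual_right (RW W)"
proof
  fix D assume D: "D \<in> LW W"
  have "is_psido D" using D by (simp add: LW_def is_diffop_def)
  with assms D have "D \<in> Qfield"
    unfolding Qfield_def by (blast intro: opmult_LW_RW_in_weyl)
  with D show "D \<in> dual_right (RW W)"
    unfolding dual_right_def by (blast intro: opmult_LW_RW_in_weyl)
qed

lemma dual_right_subset_LW:
  assumes g: "mult_op g \<in> RW W" "g \<noteq> 0" and W: "\<forall>w\<in>W. \<exists>D\<in>RW W. act D 1 = w"
  shows "dual_right (RW W) \<subseteq> LW W"
proof
  fix q assume "q \<in> dual_right (RW W)"
  then have psido: "is_psido q" and qR: "\<And>D. D \<in> RW W \<Longrightarrow> opmult q D \<in> weyl"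
    by (auto simp: dual_right_def Qfield_def)
  have q: "is_diffop q"
    using diffop_if_opmult_mult_op_diffop[OF psido g(2)] qR[OF g(1)] by (simp add: weyl_def)
  have "act q w \<in> range polyR" if "w \<in> W" for w
  proof -
    obtain D where D: "D \<in> RW W" and "act D (polyR 1) = w" using W \<open>w \<in> W\<close> by auto
    then have "act q w = act (opmult q D) (polyR 1)"
      by (simp add: act_opmult[OF q] RW_def)
    then show ?thesis using act_weyl_polyR[OF qR[OF D], of 1] by simp
  qed
  with q show "q \<in> LW W" by (simp add: LW_def)
qed

(* The normalising factor m_V only enters through m \<noteq> 0, and one exponent r serves all \<lambda>. *)
locale adelic_presentation =
  fixes \<Lambda> :: "complex set" and Vs :: "complex \<Rightarrow> complex poly set" and r :: nat
    and m :: "complex poly" and W :: "rfun set"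
  assumes finite_\<Lambda>: "finite \<Lambda>"
    and subspace: "c \<in> \<Lambda> \<Longrightarrow> csubspace (Vs c)"
    and power_dvd_in_Vs: "c \<in> \<Lambda> \<Longrightarrow> [:-c, 1:] ^ r dvd p \<Longrightarrow> p \<in> Vs c"
    and m_nonzero: "m \<noteq> 0"
    and W_eq: "W = (\<lambda>p. polyR p / polyR m) ` (\<Inter>c\<in>\<Lambda>. Vs c)"
begin

definition conductor :: "complex poly" where
  "conductor = (\<Prod>c\<in>\<Lambda>. [:-c, 1:] ^ r)"

lemma conductor_nonzero: "conductor \<noteq> 0"
  unfolding conductor_def by (simp add: finite_\<Lambda>)

lemma conductor_mult_in_Vs: "conductor * h \<in> (\<Inter>c\<in>\<Lambda>. Vs c)"
proof -
  have "[:-c, 1:] ^ r dvd conductor * h" if "c \<in> \<Lambda>" for c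
    unfolding conductor_def using finite_\<Lambda> that by (intro dvd_mult2 dvd_prodI)
  then show ?thesis using power_dvd_in_Vs by blast
qed

lemma mult_op_conductor_in_RW: "mult_op (polyR conductor) \<in> RW W"
proof -
  have "act (mult_op (polyR conductor)) (polyR h) = polyR (conductor * (h * m)) / polyR m" for h
    using m_nonzero by (simp add: act_mult_op polyR_mult)
  then show ?thesis
    unfolding RW_def W_eq using diffop_mult_op conductor_mult_in_Vs by blast
qed

lemma mult_in_Vs_if_locally_const:
  assumes "c \<in> \<Lambda>" and "p \<in> Vs c" and "[:-c, 1:] ^ r dvd g - [:a:]"
  shows "p * g \<in> Vs c"
proof -
  have "p * g = smult a p + p * (g - [:a:])"
    by (simp add: algebra_simps)
  moreover have "smult a p \<in> Vs c" and "p * (g - [:a:]) \<in> Vs c"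
    using assms subspace power_dvd_in_Vs by (auto simp: csubspace_def)
  moreover have "x + y \<in> Vs c" if "x \<in> Vs c" "y \<in> Vs c" for x y
    using assms(1) subspace that by (simp add: csubspace_def)
  ultimately show ?thesis by metis
qed

lemma exists_RW_act_one:
  assumes "w \<in> W"
  shows "\<exists>D\<in>RW W. act D 1 = w"
proof -
  obtain p where p: "p \<in> (\<Inter>c\<in>\<Lambda>. Vs c)" and w: "w = polyR p / polyR m"
    using assms W_eq by blast
  obtain t where t: "\<forall>c\<in>\<Lambda>. [:-c, 1:] ^ Suc r dvd t - [:c, -1:]"
    using poly_chinese_remainder[OF finite_\<Lambda>, where R = "Suc r" and g = "\<lambda>c. [:c, -1:]"] by blast
  have act: "act (taylor_op w t (Suc r)) (polyR h) = polyR (p * taylor_poly t (Suc r) h) / polyR m" for h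
    by (simp add: act_taylor_op w polyR_mult)
  have "p * taylor_poly t (Suc r) h \<in> Vs c" if "c \<in> \<Lambda>" for c h
  proof (rule mult_in_Vs_if_locally_const)
    have "[:-c, 1:] ^ Suc r dvd taylor_poly t (Suc r) h - [:poly h c:]"
      using t that by (intro taylor_poly_congruent_value) auto
    then show "[:-c, 1:] ^ r dvd taylor_poly t (Suc r) h - [:poly h c:]"
      by (rule dvd_trans[rotated]) (rule le_imp_power_dvd, simp)
  qed (use p that in auto)
  then have "taylor_op w t (Suc r) \<in> RW W"
    unfolding RW_def W_eq using diffop_taylor_op act by blast
  moreover have "act (taylor_op w t (Suc r)) 1 = w"
    using act_taylor_op[of w t "Suc r" 1] by (simp add: taylor_poly_1)
  ultimately show ?thesis by blast
qed

lemma LW_eq_dual_right: "LW W = dual_right (RW W)"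
proof
  show "LW W \<subseteq> dual_right (RW W)"
    using mult_op_conductor_in_RW mult_op_polyR_in_weyl conductor_nonzero
    by (intro LW_subset_dual_right) (auto simp: mult_op_eq_0_iff)
  show "dual_right (RW W) \<subseteq> LW W"
    using mult_op_conductor_in_RW conductor_nonzero exists_RW_act_one
    by (intro dual_right_subset_LW) auto
qed

end

lemma Grad_imp_adelic_presentation:
  assumes "W \<in> Grad"
  shows "\<exists>\<Lambda> Vs r m. adelic_presentation \<Lambda> Vs r m W"
proof -
  obtain \<Lambda> Vs where fin: "finite \<Lambda>"
    and Vs: "\<forall>c\<in>\<Lambda>. csubspace (Vs c) \<and> (\<exists>r::nat. \<forall>p. [:-c, 1:] ^ r dvd p \<longrightarrow> p \<in> Vs c)"
    and W: "W = (\<lambda>p. polyR p / polyR (\<Prod>c\<in>\<Lambda>. [:-c, 1:] ^ codim (Vs c))) ` (\<Inter>c\<in>\<Lambda>. Vs c)"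
    using assms unfolding Grad_def by blast
  obtain r where r: "\<And>c p. c \<in> \<Lambda> \<Longrightarrow> [:-c, 1:] ^ r c dvd p \<Longrightarrow> p \<in> Vs c"
    using Vs by metis
  have "[:-c, 1:] ^ (\<Sum>c\<in>\<Lambda>. r c) dvd p \<Longrightarrow> p \<in> Vs c" if "c \<in> \<Lambda>" for c p
    using r[OF that] fin that by (meson dvd_trans le_imp_power_dvd member_le_sum zero_le)
  then have "adelic_presentation \<Lambda> Vs (\<Sum>c\<in>\<Lambda>. r c) (\<Prod>c\<in>\<Lambda>. [:-c, 1:] ^ codim (Vs c)) W"
    using fin Vs W by unfold_locales auto
  then show ?thesis by blast
qed

theorem lemma5p3:
  assumes "W \<in> Grad"
  shows "LW W = dual_right (RW W)"
proof -
  obtain \<Lambda> Vs r m where "adelic_presentation \<Lambda> Vs r m W"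
    using Grad_imp_adelic_presentation[OF assms] by blast
  then show ?thesis by (rule adelic_presentation.LW_eq_dual_right)
qed

end
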